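(* Let $n,k$ be positive integers with $n\ge k$. Then the Jacobi-Stirling numbers $\mathrm{JS}_n^k(z)$ and $(-1)^{n-k}\mathrm{js}_n^k(z)$ are polynomials in $z$ of degree $n-k$ with positive integer coefficients. Moreover, writing $$\mathrm{JS}_n^k(z)=a_{n,k}^{(0)}+a_{n,k}^{(1)}z+\cdots+a_{n,k}^{(n-k)}z^{n-k},\qquad (-1)^{n-k}\mathrm{js}_n^k(z)=b_{n,k}^{(0)}+b_{n,k}^{(1)}z+\cdots+b_{n,k}^{(n-k)}z^{n-k},$$ we have $$a_{n,k}^{(n-k)}=S(n,k),\quad a_{n,k}^{(0)}=U(n,k),\quad b_{n,k}^{(n-k)}=|s(n,k)|,\quad b_{n,k}^{(0)}=|u(n,k)|.$$
   Context: The Jacobi-Stirling numbers of the second kind $\mathrm{JS}_n^k(z)$ and of the first kind $\mathrm{js}_n^k(z)$ are defined for integers $n,k\ge 0$ by $\mathrm{JS}_0^0(z)=\mathrm{js}_0^0(z)=1$, $\mathrm{JS}_n^k(z)=\mathrm{js}_n^k(z)=0$ if $k\notin\{1,\dots,n\}$ (for $(n,k)\neq(0,0)$), and for $n,k\ge1$: $\mathrm{JS}_n^k(z)=\mathrm{JS}_{n-1}^{k-1}(z)+k(k+z)\mathrm{JS}_{n-1}^k(z)$ and $\mathrm{js}_n^k(z)=\mathrm{js}_{n-1}^{k-1}(z)-(n-1)(n-1+z)\mathrm{js}_{n-1}^k(z)$. Equivalently, $x^n=\sum_{k=0}^n\mathrm{JS}_n^k(z)\prod_{i=0}^{k-1}(x-i(z+i))$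 and $\prod_{i=0}^{n-1}(x-i(z+i))=\sum_{k=0}^n\mathrm{js}_n^k(z)x^k$. $S(n,k)$ and $s(n,k)$ are the Stirling numbers of the second and first kind: $x^n=\sum_k S(n,k)\prod_{i=0}^{k-1}(x-i)$ and $\prod_{i=0}^{n-1}(x-i)=\sum_k s(n,k)x^k$. $U(n,k)$ and $u(n,k)$ (central factorial numbers of even indices, $U(n,k)=T(2n,2k)$, $u(n,k)=t(2n,2k)$) are defined by $U(0,0)=u(0,0)=1$, $U(n,k)=u(n,k)=0$ if $k\notin\{1,\dots,n\}$ (for $(n,k)\ne(0,0)$), and for $n,k\ge1$: $U(n,k)=U(n-1,k-1)+k^2U(n-1,k)$, $u(n,k)=u(n-1,k-1)-(n-1)^2u(n-1,k)$. *)

theory Defs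
  imports "HOL-Computational_Algebra.Polynomial" "HOL-Combinatorics.Stirling"
begin

fun JS :: "nat \<Rightarrow> nat \<Rightarrow> int poly" where
  "JS 0 0 = 1"
| "JS 0 (Suc k) = 0"
| "JS (Suc n) 0 = 0"
| "JS (Suc n) (Suc k) = JS n k + [: int (Suc k) ^ 2, int (Suc k) :] * JS n (Suc k)"

fun js :: "nat \<Rightarrow> nat \<Rightarrow> int poly" where
  "js 0 0 = 1"
| "js 0 (Suc k) = 0"
| "js (Suc n) 0 = 0"
| "js (Suc n) (Suc k) = js n k - [: int n ^ 2, int n :] * js n (Suc k)"

fun s1 :: "nat \<Rightarrow> nat \<Rightarrow> int" where
  "s1 0 0 = 1"
| "s1 0 (Suc k) = 0"
| "s1 (Suc n) 0 = 0"
| "s1 (Suc n) (Suc k) = s1 n k - int n * s1 n (Suc k)"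

text \<open>Central factorial numbers U(n,k) = T(2n,2k) and u(n,k) = t(2n,2k).\<close>
fun U :: "nat \<Rightarrow> nat \<Rightarrow> int" where
  "U 0 0 = 1"
| "U 0 (Suc k) = 0"
| "U (Suc n) 0 = 0"
| "U (Suc n) (Suc k) = U n k + int (Suc k) ^ 2 * U n (Suc k)"

fun u :: "nat \<Rightarrow> nat \<Rightarrow> int" where
  "u 0 0 = 1"
| "u 0 (Suc k) = 0"
| "u (Suc n) 0 = 0"
| "u (Suc n) (Suc k) = u n k - int n ^ 2 * u n (Suc k)"

end

theory Submission
  imports Defs
begin

text \<open>All eight triangles of the statement satisfy the same Pascal-type recurrence
  T(n+1,k+1) = T(n,k) + w(n,k) T(n,k+1), possibly after the sign change (-1)^(n-k).
  For the two polynomial triangles the weight is linear, c + a z, with c, a \<ge> 0 and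
  strictly positive in the range that matters; an induction then shows that the
  coefficients 0, ..., n-k are positive and that the extreme coefficients are the
  triangles with weights a (top) and c (constant term).  For JS the weights are
  a = k+1, c = (k+1)^2, giving S(n,k) and U(n,k); for the signed js they are a = n,
  c = n^2, giving |s(n,k)| and |u(n,k)|.\<close>

fun triangle :: "(nat \<Rightarrow> nat \<Rightarrow> 'a::comm_ring_1) \<Rightarrow> nat \<Rightarrow> nat \<Rightarrow> 'a" where
  "triangle w 0 0 = 1"
| "triangle w 0 (Suc k) = 0"
| "triangle w (Suc n) 0 = 0"
| "triangle w (Suc n) (Suc k) = triangle w n k + w n k * triangle w n (Suc k)"

lemma recurrence_eq_0:
  fixes f :: "nat \<Rightarrow> nat \<Rightarrow> 'a::comm_ring_1"
  assumes "\<And>k. f 0 (Suc k) = 0"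
    and "\<And>n k. f (Suc n) (Suc k) = f n k + h n k * f n (Suc k)"
    and "n < k"
  shows "f n k = 0"
  using \<open>n < k\<close>
proof (induction n arbitrary: k)
  case 0
  then show ?case by (cases k) (simp_all add: assms(1))
next
  case (Suc n)
  then obtain k' where "k = Suc k'" by (cases k) auto
  with Suc show ?case by (simp add: assms(2))
qed

lemma triangle_eq_0: "n < k \<Longrightarrow> triangle w n k = 0"
  by (rule recurrence_eq_0[of "triangle w" w]) simp_all

lemma triangle_unique:
  fixes f :: "nat \<Rightarrow> nat \<Rightarrow> 'a::comm_ring_1"
  assumes "f 0 0 = 1" "\<And>k. f 0 (Suc k) = 0" "\<And>n. f (Suc n) 0 = 0"
    and "\<And>n k. f (Suc n) (Suc k) = f n k + w n k * f n (Suc k)"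
  shows "f n k = triangle w n k"
proof (induction n arbitrary: k)
  case 0
  then show ?case by (cases k) (simp_all add: assms)
next
  case (Suc n)
  then show ?case by (cases k) (simp_all add: assms)
qed

lemma signed_triangle:
  fixes f :: "nat \<Rightarrow> nat \<Rightarrow> 'a::comm_ring_1"
  assumes "f 0 0 = 1" "\<And>k. f 0 (Suc k) = 0" "\<And>n. f (Suc n) 0 = 0"
    and rec: "\<And>n k. f (Suc n) (Suc k) = f n k - w n k * f n (Suc k)"
  shows "(-1) ^ (n - k) * f n k = triangle w n k"
proof (rule triangle_unique[where f = "\<lambda>n k. (-1) ^ (n - k) * f n k"])
  fix n k
  have flip: "(-1) ^ (n - k) * f n (Suc k) = - ((-1) ^ (n - Suc k) * f n (Suc k))"
  proof (cases "k < n")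
    case True
    then obtain d where "n - k = Suc d" and "n - Suc k = d" by (metis Suc_diff_Suc)
    then show ?thesis by simp
  next
    case False
    have "f n (Suc k) = 0"
      by (rule recurrence_eq_0[of f "\<lambda>n k. - w n k"]) (use False in \<open>simp_all add: assms\<close>)
    then show ?thesis by simp
  qed
  have "(-1) ^ (Suc n - Suc k) * f (Suc n) (Suc k)
      = (-1) ^ (n - k) * f n k - w n k * ((-1) ^ (n - k) * f n (Suc k))"
    by (simp add: rec right_diff_distrib mult.left_commute)
  also have "\<dots> = (-1) ^ (n - k) * f n k + w n k * ((-1) ^ (n - Suc k) * f n (Suc k))"
    by (simp only: flip mult_minus_right diff_minus_eq_add)
  finally show "(-1) ^ (Suc n - Suc k) * f (Suc n) (Suc k)
      = (-1) ^ (n - k) * f n k + w n k * ((-1) ^ (n - Suc k) * f n (Suc k))" .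
qed (simp_all add: assms)

lemma triangle_nonneg:
  fixes w :: "nat \<Rightarrow> nat \<Rightarrow> 'a::linordered_idom"
  assumes "\<And>n k. 0 \<le> w n k"
  shows "0 \<le> triangle w n k"
proof (induction n arbitrary: k)
  case 0
  then show ?case by (cases k) simp_all
next
  case (Suc n)
  then show ?case by (cases k) (simp_all add: assms)
qed

lemma abs_signed_triangle:
  fixes f :: "nat \<Rightarrow> nat \<Rightarrow> 'a::linordered_idom"
  assumes "f 0 0 = 1" "\<And>k. f 0 (Suc k) = 0" "\<And>n. f (Suc n) 0 = 0"
    and "\<And>n k. f (Suc n) (Suc k) = f n k - w n k * f n (Suc k)"
    and "\<And>n k. 0 \<le> w n k"
  shows "\<bar>f n k\<bar> = triangle w n k"
proof -
  have "\<bar>f n k\<bar> = \<bar>(-1) ^ (n - k) * f n k\<bar>" by (simp add: abs_mult power_abs)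
  also have "\<dots> = \<bar>triangle w n k\<bar>" using signed_triangle[of f w, OF assms(1-4)] by simp
  also have "\<dots> = triangle w n k" using assms(5) by (simp add: triangle_nonneg)
  finally show ?thesis .
qed

definition linear_triangle ::
    "(nat \<Rightarrow> nat \<Rightarrow> 'a::comm_ring_1) \<Rightarrow> (nat \<Rightarrow> nat \<Rightarrow> 'a) \<Rightarrow> nat \<Rightarrow> nat \<Rightarrow> 'a poly" where
  "linear_triangle c a = triangle (\<lambda>n k. [:c n k, a n k:])"

lemma linear_triangle_simps [simp]:
  "linear_triangle c a 0 0 = 1"
  "linear_triangle c a 0 (Suc k) = 0"
  "linear_triangle c a (Suc n) 0 = 0"
  by (simp_all add: linear_triangle_def)

lemma linear_triangle_eq_0: "n < k \<Longrightarrow> linear_triangle c a n k = 0"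
  by (simp add: linear_triangle_def triangle_eq_0)

lemma coeff_linear_triangle_Suc_Suc:
  "coeff (linear_triangle c a (Suc n) (Suc k)) i
     = coeff (linear_triangle c a n k) i + c n k * coeff (linear_triangle c a n (Suc k)) i
       + (if i = 0 then 0 else a n k * coeff (linear_triangle c a n (Suc k)) (i - 1))"
  by (cases i) (simp_all add: linear_triangle_def coeff_pCons)

lemma coeff_linear_triangle_eq_0:
  "n - k < i \<Longrightarrow> coeff (linear_triangle c a n k) i = 0"
proof (induction n arbitrary: k i)
  case 0
  then show ?case by (cases k) simp_all
next
  case (Suc n)
  note IH = Suc.IH and prems = Suc.prems
  show ?case
  proof (cases k)
    case 0
    then show ?thesis by simp
  next
    case (Suc k')
    from prems have "n - k' < i" using \<open>k = Suc k'\<close> by simp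
    have next_row: "coeff (linear_triangle c a n (Suc k')) j = 0" if "i - 1 \<le> j" for j
    proof (cases "k' < n")
      case True
      show ?thesis by (rule IH) (use True \<open>n - k' < i\<close> that in linarith)
    next
      case False
      then show ?thesis by (simp add: linear_triangle_eq_0)
    qed
    have "coeff (linear_triangle c a n k') i = 0" by (rule IH) fact
    moreover have "coeff (linear_triangle c a n (Suc k')) i = 0" by (rule next_row) simp
    moreover have "coeff (linear_triangle c a n (Suc k')) (i - 1) = 0" by (rule next_row) simp
    ultimately show ?thesis
      unfolding \<open>k = Suc k'\<close> coeff_linear_triangle_Suc_Suc by simp
  qed
qed

lemma coeff_linear_triangle_top:
  "coeff (linear_triangle c a n k) (n - k) = triangle a n k"
proof (induction n arbitrary: k)
  case 0
  then show ?case by (cases k) simp_all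
next
  case (Suc n)
  note IH = Suc.IH
  show ?case
  proof (cases k)
    case 0
    then show ?thesis by simp
  next
    case (Suc k')
    show ?thesis
    proof (cases "k' < n")
      case True
      then have "coeff (linear_triangle c a n (Suc k')) (n - k') = 0"
        by (intro coeff_linear_triangle_eq_0) auto
      moreover have "n - k' - 1 = n - Suc k'" by simp
      ultimately show ?thesis
        using True IH[of k'] IH[of "Suc k'"] \<open>k = Suc k'\<close>
        by (simp add: coeff_linear_triangle_Suc_Suc)
    next
      case False
      then show ?thesis
        using IH[of k'] \<open>k = Suc k'\<close>
        by (simp add: coeff_linear_triangle_Suc_Suc linear_triangle_eq_0 triangle_eq_0)
    qed
  qed
qed

lemma coeff_linear_triangle_0:
  "coeff (linear_triangle c a n k) 0 = triangle c n k"
proof (induction n arbitrary: k)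
  case 0
  then show ?case by (cases k) simp_all
next
  case (Suc n)
  then show ?case by (cases k) (simp_all add: coeff_linear_triangle_Suc_Suc)
qed

lemma coeff_linear_triangle_nonneg:
  fixes c a :: "nat \<Rightarrow> nat \<Rightarrow> 'a::linordered_idom"
  assumes "\<And>n k. k < n \<Longrightarrow> 0 \<le> c n k" and "\<And>n k. k < n \<Longrightarrow> 0 \<le> a n k"
  shows "0 \<le> coeff (linear_triangle c a n k) i"
proof (induction n arbitrary: k i)
  case 0
  then show ?case by (cases k) (simp_all add: coeff_1)
next
  case (Suc n)
  note IH = Suc.IH
  show ?case
  proof (cases k)
    case 0
    then show ?thesis by simp
  next
    case (Suc k')
    then show ?thesis
      using IH assms linear_triangle_eq_0[of n "Suc k'" c a]
      by (cases "k' < n") (simp_all add: coeff_linear_triangle_Suc_Suc)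
  qed
qed

lemma coeff_linear_triangle_pos:
  fixes c a :: "nat \<Rightarrow> nat \<Rightarrow> 'a::linordered_idom"
  assumes c_pos: "\<And>n k. k < n \<Longrightarrow> 0 < c n k" and a_pos: "\<And>n k. k < n \<Longrightarrow> 0 < a n k"
    and "k \<le> n" and "k = 0 \<Longrightarrow> n = 0" and "i \<le> n - k"
  shows "0 < coeff (linear_triangle c a n k) i"
  using assms(3-5)
proof (induction n arbitrary: k i)
  case 0
  then show ?case by simp
next
  case (Suc n)
  from Suc.prems obtain k' where k: "k = Suc k'" by (cases k) auto
  have nonneg: "0 \<le> coeff (linear_triangle c a n j) i'" for j i'
    using c_pos a_pos by (intro coeff_linear_triangle_nonneg) (simp_all add: less_imp_le)
  consider "k' = n" | "k' < n" "i \<le> n - Suc k'" | "k' < n" "i = n - k'"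
    using Suc.prems k by linarith
  then show ?case
  proof cases
    case 1
    then have "i = 0" using Suc.prems k by simp
    moreover have "0 < coeff (linear_triangle c a n k') i" using Suc.IH[of k' i] 1 \<open>i = 0\<close> by simp
    ultimately show ?thesis using 1
      by (simp add: coeff_linear_triangle_Suc_Suc k linear_triangle_eq_0)
  next
    case 2
    then have "0 < coeff (linear_triangle c a n (Suc k')) i" using Suc.IH[of "Suc k'" i] by simp
    then have "0 < c n k' * coeff (linear_triangle c a n (Suc k')) i"
      using c_pos \<open>k' < n\<close> by simp
    moreover have "0 \<le> (if i = 0 then 0 else a n k' * coeff (linear_triangle c a n (Suc k')) (i - 1))"
      using nonneg a_pos[OF \<open>k' < n\<close>] by simp
    ultimately show ?thesis
      unfolding k coeff_linear_triangle_Suc_Suc using nonneg[of k' i] by linarith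
  next
    case 3
    then have "0 < coeff (linear_triangle c a n (Suc k')) (i - 1)" "i \<noteq> 0"
      using Suc.IH[of "Suc k'" "i - 1"] by simp_all
    then have "0 < (if i = 0 then 0 else a n k' * coeff (linear_triangle c a n (Suc k')) (i - 1))"
      using a_pos \<open>k' < n\<close> by simp
    moreover have "0 \<le> c n k' * coeff (linear_triangle c a n (Suc k')) i"
      using nonneg c_pos[OF \<open>k' < n\<close>] by simp
    ultimately show ?thesis
      unfolding k coeff_linear_triangle_Suc_Suc using nonneg[of k' i] by linarith
  qed
qed

lemma degree_linear_triangle:
  fixes c a :: "nat \<Rightarrow> nat \<Rightarrow> 'a::linordered_idom"
  assumes "\<And>n k. k < n \<Longrightarrow> 0 < c n k" and "\<And>n k. k < n \<Longrightarrow> 0 < a n k"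
    and "k \<le> n" and "k = 0 \<Longrightarrow> n = 0"
  shows "degree (linear_triangle c a n k) = n - k"
proof (rule antisym)
  show "degree (linear_triangle c a n k) \<le> n - k"
    by (rule degree_le) (auto intro: coeff_linear_triangle_eq_0)
  have "0 < coeff (linear_triangle c a n k) (n - k)"
    by (rule coeff_linear_triangle_pos[OF assms order_refl])
  then show "n - k \<le> degree (linear_triangle c a n k)"
    by (intro le_degree) simp
qed

lemma JS_eq_linear_triangle:
  "JS n k = linear_triangle (\<lambda>_ k. int (Suc k) ^ 2) (\<lambda>_ k. int (Suc k)) n k"
  unfolding linear_triangle_def by (rule triangle_unique[of JS]) simp_all

lemma signed_js_eq_linear_triangle:
  "(-1) ^ (n - k) * js n k = linear_triangle (\<lambda>n _. int n ^ 2) (\<lambda>n _. int n) n k"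
  unfolding linear_triangle_def by (rule signed_triangle[of js]) simp_all

lemma Stirling_eq_triangle: "int (Stirling n k) = triangle (\<lambda>_ k. int (Suc k)) n k"
  by (rule triangle_unique[of "\<lambda>n k. int (Stirling n k)"]) (simp_all add: algebra_simps)

lemma U_eq_triangle: "U n k = triangle (\<lambda>_ k. int (Suc k) ^ 2) n k"
  by (rule triangle_unique[of U]) simp_all

lemma abs_s1_eq_triangle: "\<bar>s1 n k\<bar> = triangle (\<lambda>n _. int n) n k"
  by (rule abs_signed_triangle[of s1]) simp_all

lemma abs_u_eq_triangle: "\<bar>u n k\<bar> = triangle (\<lambda>n _. int n ^ 2) n k"
  by (rule abs_signed_triangle[of u]) simp_all

lemma degree_JS: "0 < k \<Longrightarrow> k \<le> n \<Longrightarrow> degree (JS n k) = n - k"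
  unfolding JS_eq_linear_triangle by (rule degree_linear_triangle) simp_all

lemma coeff_JS_pos: "0 < k \<Longrightarrow> k \<le> n \<Longrightarrow> i \<le> n - k \<Longrightarrow> 0 < coeff (JS n k) i"
  unfolding JS_eq_linear_triangle by (rule coeff_linear_triangle_pos) simp_all

lemma coeff_JS_top: "coeff (JS n k) (n - k) = int (Stirling n k)"
  by (simp only: JS_eq_linear_triangle coeff_linear_triangle_top Stirling_eq_triangle)

lemma coeff_JS_0: "coeff (JS n k) 0 = U n k"
  by (simp only: JS_eq_linear_triangle coeff_linear_triangle_0 U_eq_triangle)

lemma degree_signed_js: "0 < k \<Longrightarrow> k \<le> n \<Longrightarrow> degree ((-1) ^ (n - k) * js n k) = n - k"
  unfolding signed_js_eq_linear_triangle by (rule degree_linear_triangle) simp_all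

lemma coeff_signed_js_pos:
  "0 < k \<Longrightarrow> k \<le> n \<Longrightarrow> i \<le> n - k \<Longrightarrow> 0 < coeff ((-1) ^ (n - k) * js n k) i"
  unfolding signed_js_eq_linear_triangle by (rule coeff_linear_triangle_pos) simp_all

lemma coeff_signed_js_top: "coeff ((-1) ^ (n - k) * js n k) (n - k) = \<bar>s1 n k\<bar>"
  by (simp only: signed_js_eq_linear_triangle coeff_linear_triangle_top abs_s1_eq_triangle)

lemma coeff_signed_js_0: "coeff ((-1) ^ (n - k) * js n k) 0 = \<bar>u n k\<bar>"
  by (simp only: signed_js_eq_linear_triangle coeff_linear_triangle_0 abs_u_eq_triangle)

theorem theorem1:
  fixes n k :: nat
  assumes "1 \<le> k" and "k \<le> n"
  shows "degree (JS n k) = n - k \<and> (\<forall>i \<le> n - k. coeff (JS n k) i > 0)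
       \<and> degree ((-1) ^ (n - k) * js n k) = n - k
       \<and> (\<forall>i \<le> n - k. coeff ((-1) ^ (n - k) * js n k) i > 0)
       \<and> coeff (JS n k) (n - k) = int (Stirling n k)
       \<and> coeff (JS n k) 0 = U n k
       \<and> coeff ((-1) ^ (n - k) * js n k) (n - k) = \<bar>s1 n k\<bar>
       \<and> coeff ((-1) ^ (n - k) * js n k) 0 = \<bar>u n k\<bar>"
proof -
  have "0 < k" using assms(1) by simp
  with assms(2) show ?thesis
    by (simp add: degree_JS coeff_JS_pos degree_signed_js coeff_signed_js_pos
        coeff_JS_top coeff_JS_0 coeff_signed_js_top coeff_signed_js_0)
qed

end
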